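(* In any latin square of even order, the number of transversals is even.
   Context: A latin square of order $n$ is an $n\times n$ array of $n$ symbols in which each symbol occurs exactly once in each row and column. A transversal is a set of $n$ cells, one from each row and one from each column, no two containing the same symbol. *)

theory Defs
  imports Main
begin

definition latin_square :: "nat \<Rightarrow> 'a set \<Rightarrow> (nat \<Rightarrow> nat \<Rightarrow> 'a) \<Rightarrow> bool" where
  "latin_square n S L \<longleftrightarrow>
     finite S \<and> card S = n \<and>
     (\<forall>i<n. \<forall>j<n. L i j \<in> S) \<and>
     (\<forall>i<n. \<forall>s\<in>S. \<exists>!j. j < n \<and> L i j = s) \<and>
     (\<forall>j<n. \<forall>s\<in>S. \<exists>!i. i < n \<and> L i j = s)"

definition transversal :: "nat \<Rightarrow> (nat \<Rightarrow> nat \<Rightarrow> 'a) \<Rightarrow> (nat \<times> nat) set \<Rightarrow> bool" where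
  "transversal n L T \<longleftrightarrow>
     T \<subseteq> {0..<n} \<times> {0..<n} \<and> card T = n \<and>
     (\<forall>i<n. \<exists>!j. (i, j) \<in> T) \<and>
     (\<forall>j<n. \<exists>!i. (i, j) \<in> T) \<and>
     inj_on (\<lambda>(i, j). L i j) T"

definition transversals :: "nat \<Rightarrow> (nat \<Rightarrow> nat \<Rightarrow> 'a) \<Rightarrow> (nat \<times> nat) set set" where
  "transversals n L = {T. transversal n L T}"

end

theory Submission
  imports Defs "HOL-Library.Z2" "Jordan_Normal_Form.Determinant"
begin

(* A transversal is the same as a permutation p of {0..<n} whose symbols L i (p i)
   are pairwise distinct; we count such permutations modulo 2, i.e. in bit = GF(2).
   (1) Since every row contains each symbol once, the symbols of p lie in S, |S| = n,
       so they are distinct iff they exhaust S.  The number of A \<subseteq> S containing all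
       of them is 2^(n - #symbols), odd iff they exhaust S.  Hence the count equals
       \<Sum>_{A \<subseteq> S} \<Sum>_p [\<forall>i. L i (p i) \<in> A] in GF(2).
   (2) In characteristic 2 the determinant is the permanent, so the inner sum is
       det M_A, where M_A is the 0/1 matrix marking the cells with symbol in A.
   (3) Each row of M_A has |A| ones.  If |A| is even the all-ones vector lies in the
       kernel, so det M_A = 0; if |A| is odd then M_{S-A} = M_A (J + I), and for even n
       (J + I)^2 = I.  Either way det M_{S-A} = det M_A.
   (4) Pairing A with S - A is a fixed-point-free involution of Pow S, so the sum is 0.
   The file develops the GF(2) counting facts, the matrix facts for arrays whose rows
   are permutations of S, and the bijection
   between transversals and permutations; the theorem then combines them. *)

(* The library's simp rules rewrite + and * on bit into XOR and AND;
   we want to reason with the ring operations instead. *)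
declare add_bit_eq_xor[simp del] mult_bit_eq_and[simp del]

lemma bit_add_self [simp]: "(x::bit) + x = 0"
  by (cases x) auto

lemma of_nat_bit: "(of_nat k :: bit) = of_bool (odd k)"
  by (induction k) auto

(* Supersets of B inside S correspond to subsets of S - B. *)
lemma card_supsets_in_Pow:
  assumes "finite S" "B \<subseteq> S"
  shows "card {A \<in> Pow S. B \<subseteq> A} = 2 ^ (card S - card B)"
proof -
  have "bij_betw (\<lambda>A. A - B) {A \<in> Pow S. B \<subseteq> A} (Pow (S - B))"
    by (rule bij_betw_byWitness[where f'="\<lambda>C. C \<union> B"]) (use assms in auto)
  hence "card {A \<in> Pow S. B \<subseteq> A} = card (Pow (S - B))"
    by (rule bij_betw_same_card)
  also have "\<dots> = 2 ^ (card S - card B)"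
    using assms by (simp add: card_Pow card_Diff_subset finite_subset)
  finally show ?thesis .
qed

lemma sum_supsets_bit:
  assumes "finite S" "B \<subseteq> S"
  shows "(\<Sum>A\<in>Pow S. of_bool (B \<subseteq> A) :: bit) = of_bool (B = S)"
proof -
  have "(\<Sum>A\<in>Pow S. of_bool (B \<subseteq> A) :: bit) = of_nat (card (Pow S \<inter> {A. B \<subseteq> A}))"
    using assms(1) by simp
  also have "Pow S \<inter> {A. B \<subseteq> A} = {A \<in> Pow S. B \<subseteq> A}"
    by blast
  also have "of_nat (card \<dots>) = (of_nat (2 ^ (card S - card B)) :: bit)"
    using card_supsets_in_Pow[OF assms] by simp
  also have "\<dots> = of_bool (card B = card S)"
    using card_mono[OF assms] by (simp add: of_nat_bit)
  also have "card B = card S \<longleftrightarrow> B = S"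
    using assms card_subset_eq by blast
  finally show ?thesis .
qed

(* A GF(2)-valued function on Pow S that is invariant under complementation sums to 0,
   because A \<mapsto> S - A pairs the sets containing a fixed s0 \<in> S with those avoiding it. *)
lemma sum_Pow_complement_invariant:
  fixes f :: "'a set \<Rightarrow> bit"
  assumes "finite S" "s0 \<in> S" and invariant: "\<And>A. A \<subseteq> S \<Longrightarrow> f (S - A) = f A"
  shows "(\<Sum>A\<in>Pow S. f A) = 0"
proof -
  let ?Out = "{A \<in> Pow S. s0 \<notin> A}" and ?In = "{A \<in> Pow S. s0 \<in> A}"
  have "?Out \<union> ?In = Pow S" by auto
  hence "sum f (Pow S) = sum f ?Out + sum f ?In"
    using assms(1) sum.union_disjoint[of ?Out ?In f] by auto
  moreover have "sum f ?In = sum f ?Out"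
  proof -
    have "bij_betw (\<lambda>A. S - A) ?Out ?In"
      by (rule bij_betw_byWitness[where f'="\<lambda>A. S - A"]) (use assms(2) in auto)
    hence "sum f ?In = sum (f \<circ> (\<lambda>A. S - A)) ?Out"
      by (simp add: sum.reindex_bij_betw)
    also have "\<dots> = sum f ?Out"
      by (rule sum.cong) (auto intro: invariant)
    finally show ?thesis .
  qed
  ultimately show ?thesis by simp
qed

definition ones_plus_id :: "nat \<Rightarrow> bit mat" where
  "ones_plus_id n = mat n n (\<lambda>(i, j). of_bool (i = j) + 1)"

(* (J + I)^2 = J^2 + I = n J + I, which is I for even n. *)
lemma ones_plus_id_squared:
  assumes "even n"
  shows "ones_plus_id n * ones_plus_id n = 1\<^sub>m n"
proof (rule eq_matI)
  fix i j assume "i < dim_row (1\<^sub>m n)" "j < dim_col (1\<^sub>m n)"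
  hence ij: "i < n" "j < n" by auto
  have "(ones_plus_id n * ones_plus_id n) $$ (i, j)
      = (\<Sum>k\<in>{0..<n}. (of_bool (i = k) + 1) * (of_bool (k = j) + (1::bit)))"
    using ij by (simp add: ones_plus_id_def scalar_prod_def)
  also have "\<dots> = (\<Sum>k\<in>{0..<n}. of_bool (i = k) * of_bool (k = j)
                     + of_bool (i = k) + of_bool (k = j) + 1)"
    by (simp add: algebra_simps)
  also have "\<dots> = of_bool (i = j) + 1 + 1 + of_nat n"
    using ij by (simp add: sum.distrib)
  also have "\<dots> = of_bool (i = j)"
    using assms by (simp add: add.assoc of_nat_bit)
  finally show "(ones_plus_id n * ones_plus_id n) $$ (i, j) = 1\<^sub>m n $$ (i, j)"
    using ij by simp
qed (auto simp: ones_plus_id_def)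

lemma det_ones_plus_id:
  assumes "even n"
  shows "det (ones_plus_id n) = 1"
proof -
  have K: "ones_plus_id n \<in> carrier_mat n n" by (simp add: ones_plus_id_def)
  have "det (ones_plus_id n) * det (ones_plus_id n) = 1"
    using det_mult[OF K K] ones_plus_id_squared[OF assms] by simp
  thus ?thesis by (cases "det (ones_plus_id n)") auto
qed

lemma signof_bit: "(signof p :: bit) = 1"
  by (simp add: sign_def)

lemma det_bit_permanent:
  assumes "M \<in> carrier_mat n n"
  shows "det (M :: bit mat) = (\<Sum>p | p permutes {0..<n}. \<Prod>i = 0..<n. M $$ (i, p i))"
  using assms by (simp add: det_def signof_bit)

definition symbol_mat :: "nat \<Rightarrow> (nat \<Rightarrow> nat \<Rightarrow> 'a) \<Rightarrow> 'a set \<Rightarrow> bit mat" where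
  "symbol_mat n L A = mat n n (\<lambda>(i, j). of_bool (L i j \<in> A))"

lemma det_symbol_mat:
  "det (symbol_mat n L A) = (\<Sum>p | p permutes {0..<n}. of_bool (\<forall>i\<in>{0..<n}. L i (p i) \<in> A))"
proof -
  have "(\<Prod>i = 0..<n. symbol_mat n L A $$ (i, p i)) = of_bool (\<forall>i\<in>{0..<n}. L i (p i) \<in> A)"
    if "p permutes {0..<n}" for p
  proof -
    have "(\<Prod>i = 0..<n. symbol_mat n L A $$ (i, p i)) = (\<Prod>i = 0..<n. of_bool (L i (p i) \<in> A))"
      using that by (intro prod.cong) (simp_all add: symbol_mat_def permutes_in_image)
    thus ?thesis by simp
  qed
  thus ?thesis
    by (simp add: det_bit_permanent[of _ n] symbol_mat_def)
qed

definition transversal_perms :: "nat \<Rightarrow> (nat \<Rightarrow> nat \<Rightarrow> 'a) \<Rightarrow> (nat \<Rightarrow> nat) set" where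
  "transversal_perms n L = {p. p permutes {0..<n} \<and> inj_on (\<lambda>i. L i (p i)) {0..<n}}"

locale row_latin =
  fixes n :: nat and S :: "'a set" and L :: "nat \<Rightarrow> nat \<Rightarrow> 'a"
  assumes finite_symbols: "finite S"
    and card_symbols: "card S = n"
    and row_bij: "\<And>i. i < n \<Longrightarrow> bij_betw (L i) {0..<n} S"
begin

lemma symbol_in_S: "i < n \<Longrightarrow> j < n \<Longrightarrow> L i j \<in> S"
  using row_bij bij_betw_apply by fastforce

lemma row_sum_symbol_mat:
  assumes "i < n" "A \<subseteq> S"
  shows "(\<Sum>k\<in>{0..<n}. of_bool (L i k \<in> A) :: bit) = of_bool (odd (card A))"
proof -
  let ?cols = "{0..<n} \<inter> {k. L i k \<in> A}"
  have bij: "bij_betw (L i) {0..<n} S" using row_bij[OF assms(1)] .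
  have "inj_on (L i) ?cols"
    using bij_betw_imp_inj_on[OF bij] by (rule inj_on_subset) blast
  hence "card ?cols = card (L i ` ?cols)"
    by (rule card_image[symmetric])
  also have "L i ` ?cols = A"
    using bij assms(2) unfolding bij_betw_def by blast
  finally show ?thesis by (simp add: of_nat_bit)
qed

(* For |A| even the all-ones vector is in the kernel of M_A. *)
lemma det_symbol_mat_even:
  assumes "n > 0" "A \<subseteq> S" "even (card A)"
  shows "det (symbol_mat n L A) = 0"
proof -
  let ?ones = "vec n (\<lambda>_. 1 :: bit)"
  have "?ones \<noteq> 0\<^sub>v n"
    using assms(1) by (metis index_vec index_zero_vec(1) zero_neq_one)
  moreover have "symbol_mat n L A *\<^sub>v ?ones = 0\<^sub>v n"
  proof (rule eq_vecI)
    fix i assume "i < dim_vec (0\<^sub>v n :: bit vec)"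
    hence i: "i < n" by simp
    have "(symbol_mat n L A *\<^sub>v ?ones) $ i = (\<Sum>k\<in>{0..<n}. of_bool (L i k \<in> A) :: bit)"
      using i by (simp add: symbol_mat_def scalar_prod_def)
    thus "(symbol_mat n L A *\<^sub>v ?ones) $ i = 0\<^sub>v n $ i"
      using i row_sum_symbol_mat[OF i assms(2)] assms(3) by simp
  qed (simp add: symbol_mat_def)
  moreover have "symbol_mat n L A \<in> carrier_mat n n" by (simp add: symbol_mat_def)
  ultimately show ?thesis
    using det_0_iff_vec_prod_zero by (metis vec_carrier)
qed

(* For |A| odd, complementing A in S amounts to multiplying M_A by J + I:
   entry (i, j) of M_A (J + I) is [L i j \<in> A] + |A| = [L i j \<in> A] + 1. *)
lemma symbol_mat_complement:
  assumes "A \<subseteq> S" "odd (card A)"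
  shows "symbol_mat n L (S - A) = symbol_mat n L A * ones_plus_id n"
proof (rule eq_matI)
  fix i j assume "i < dim_row (symbol_mat n L A * ones_plus_id n)"
    "j < dim_col (symbol_mat n L A * ones_plus_id n)"
  hence ij: "i < n" "j < n" by (auto simp: symbol_mat_def ones_plus_id_def)
  have "(symbol_mat n L A * ones_plus_id n) $$ (i, j)
      = (\<Sum>k\<in>{0..<n}. of_bool (L i k \<in> A) * (of_bool (k = j) + (1::bit)))"
    using ij by (simp add: symbol_mat_def ones_plus_id_def scalar_prod_def)
  also have "\<dots> = (\<Sum>k\<in>{0..<n}. of_bool (L i k \<in> A) * of_bool (k = j))
                 + (\<Sum>k\<in>{0..<n}. of_bool (L i k \<in> A) :: bit)"
    by (simp add: distrib_left sum.distrib)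
  also have "\<dots> = of_bool (L i j \<in> A) + 1"
    using ij row_sum_symbol_mat[OF ij(1) assms(1)] assms(2) by simp
  also have "\<dots> = symbol_mat n L (S - A) $$ (i, j)"
    using ij symbol_in_S[OF ij] by (cases "L i j \<in> A") (simp_all add: symbol_mat_def)
  finally show "symbol_mat n L (S - A) $$ (i, j) = (symbol_mat n L A * ones_plus_id n) $$ (i, j)" ..
qed (auto simp: symbol_mat_def ones_plus_id_def)

lemma det_symbol_mat_complement:
  assumes "even n" "n > 0" "A \<subseteq> S"
  shows "det (symbol_mat n L (S - A)) = det (symbol_mat n L A)"
proof (cases "even (card A)")
  case True
  have "card (S - A) = n - card A"
    using assms(3) finite_symbols card_symbols by (simp add: card_Diff_subset finite_subset)
  hence "even (card (S - A))"
    using True assms(1) by simp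
  thus ?thesis
    using det_symbol_mat_even[OF assms(2)] True assms(3) by auto
next
  case False
  have "symbol_mat n L A \<in> carrier_mat n n" "ones_plus_id n \<in> carrier_mat n n"
    by (auto simp: symbol_mat_def ones_plus_id_def)
  hence "det (symbol_mat n L (S - A)) = det (symbol_mat n L A) * det (ones_plus_id n)"
    using symbol_mat_complement[OF assms(3) False] by (simp add: det_mult)
  thus ?thesis
    using det_ones_plus_id[OF assms(1)] by simp
qed

lemma transversal_perm_iff_exhaustive:
  assumes "p permutes {0..<n}"
  shows "inj_on (\<lambda>i. L i (p i)) {0..<n} \<longleftrightarrow> (\<lambda>i. L i (p i)) ` {0..<n} = S"
proof -
  have sub: "(\<lambda>i. L i (p i)) ` {0..<n} \<subseteq> S"
    using assms symbol_in_S by (auto simp: permutes_in_image)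
  have "inj_on (\<lambda>i. L i (p i)) {0..<n} \<longleftrightarrow> card ((\<lambda>i. L i (p i)) ` {0..<n}) = card S"
    using card_symbols by (simp add: inj_on_iff_eq_card)
  also have "\<dots> \<longleftrightarrow> (\<lambda>i. L i (p i)) ` {0..<n} = S"
    using sub finite_symbols card_subset_eq by blast
  finally show ?thesis .
qed

lemma card_transversal_perms_bit:
  "(of_nat (card (transversal_perms n L)) :: bit) = (\<Sum>A\<in>Pow S. det (symbol_mat n L A))"
proof -
  let ?P = "{p. p permutes {0..<n}}"
  let ?im = "\<lambda>p. (\<lambda>i. L i (p i)) ` {0..<n}"
  have "(of_nat (card (transversal_perms n L)) :: bit)
      = (\<Sum>p\<in>?P. of_bool (inj_on (\<lambda>i. L i (p i)) {0..<n}))"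
    by (simp add: finite_permutations transversal_perms_def Collect_conj_eq Int_commute)
  also have "\<dots> = (\<Sum>p\<in>?P. \<Sum>A\<in>Pow S. of_bool (?im p \<subseteq> A))"
  proof (rule sum.cong)
    fix p assume "p \<in> ?P"
    hence p: "p permutes {0..<n}" by simp
    have symbols: "?im p \<subseteq> S"
      using p symbol_in_S by (auto simp: permutes_in_image)
    have "(\<Sum>A\<in>Pow S. of_bool (?im p \<subseteq> A) :: bit) = of_bool (?im p = S)"
      by (rule sum_supsets_bit[OF finite_symbols symbols])
    thus "(of_bool (inj_on (\<lambda>i. L i (p i)) {0..<n}) :: bit) = (\<Sum>A\<in>Pow S. of_bool (?im p \<subseteq> A))"
      unfolding transversal_perm_iff_exhaustive[OF p] by (rule sym)
  qed simp
  also have "\<dots> = (\<Sum>A\<in>Pow S. \<Sum>p\<in>?P. of_bool (\<forall>i\<in>{0..<n}. L i (p i) \<in> A))"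
    by (subst sum.swap) (simp add: image_subset_iff)
  also have "\<dots> = (\<Sum>A\<in>Pow S. det (symbol_mat n L A))"
    by (simp add: det_symbol_mat)
  finally show ?thesis .
qed

end

lemma latin_square_row_latin:
  assumes "latin_square n S L"
  shows "row_latin n S L"
proof
  show "finite S" "card S = n" using assms by (auto simp: latin_square_def)
  fix i assume i: "i < n"
  have into: "\<forall>j<n. L i j \<in> S" and unique: "\<forall>s\<in>S. \<exists>!j. j < n \<and> L i j = s"
    using assms i by (auto simp: latin_square_def)
  show "bij_betw (L i) {0..<n} S"
    unfolding bij_betw_def
  proof
    show "inj_on (L i) {0..<n}"
    proof (rule inj_onI)
      fix a b assume a: "a \<in> {0..<n}" and b: "b \<in> {0..<n}" and eq: "L i a = L i b"
      have "\<exists>!j. j < n \<and> L i j = L i a"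
        using a into unique by simp
      thus "a = b"
        using a b eq by (metis (no_types) atLeastLessThan_iff)
    qed
    show "L i ` {0..<n} = S"
    proof
      show "L i ` {0..<n} \<subseteq> S" using into by auto
      show "S \<subseteq> L i ` {0..<n}"
      proof
        fix s assume "s \<in> S"
        then obtain j where "j < n" "L i j = s"
          using unique by blast
        thus "s \<in> L i ` {0..<n}" by auto
      qed
    qed
  qed
qed

definition perm_graph :: "nat \<Rightarrow> (nat \<Rightarrow> nat) \<Rightarrow> (nat \<times> nat) set" where
  "perm_graph n p = (\<lambda>i. (i, p i)) ` {0..<n}"

lemma perm_graph_inj: "inj_on (perm_graph n) {p. p permutes {0..<n}}"
proof (rule inj_onI)
  fix p q assume p: "p \<in> {p. p permutes {0..<n}}" and q: "q \<in> {p. p permutes {0..<n}}"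
    and eq: "perm_graph n p = perm_graph n q"
  show "p = q"
  proof
    fix x show "p x = q x"
    proof (cases "x < n")
      case True
      hence "(x, p x) \<in> perm_graph n p" by (auto simp: perm_graph_def)
      hence "(x, p x) \<in> perm_graph n q" using eq by simp
      thus ?thesis by (auto simp: perm_graph_def)
    qed (use p q in \<open>auto simp: permutes_def\<close>)
  qed
qed

lemma transversal_perm_graph:
  assumes "p \<in> transversal_perms n L"
  shows "transversal n L (perm_graph n p)"
proof -
  have p: "p permutes {0..<n}" and inj: "inj_on (\<lambda>i. L i (p i)) {0..<n}"
    using assms by (auto simp: transversal_perms_def)
  have "perm_graph n p \<subseteq> {0..<n} \<times> {0..<n}"
    using p by (auto simp: perm_graph_def permutes_in_image)
  moreover have "card (perm_graph n p) = n"
    unfolding perm_graph_def by (subst card_image) (auto intro: inj_onI)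
  moreover have "\<forall>i<n. \<exists>!j. (i, j) \<in> perm_graph n p"
  proof (intro allI impI)
    fix i assume "i < n"
    thus "\<exists>!j. (i, j) \<in> perm_graph n p"
      by (intro ex1I[of _ "p i"]) (auto simp: perm_graph_def)
  qed
  moreover have "\<forall>j<n. \<exists>!i. (i, j) \<in> perm_graph n p"
  proof (intro allI impI)
    fix j assume "j < n"
    then obtain i where "i < n" "p i = j"
      using p by (metis atLeastLessThan_iff permutes_def zero_le)
    thus "\<exists>!i. (i, j) \<in> perm_graph n p"
      using permutes_inj[OF p] by (intro ex1I[of _ i]) (auto simp: perm_graph_def dest: injD)
  qed
  moreover have "inj_on (\<lambda>(i, j). L i j) (perm_graph n p)"
    using inj by (auto simp: perm_graph_def inj_on_def)
  ultimately show ?thesis by (simp add: transversal_def)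
qed

definition row_column :: "nat \<Rightarrow> (nat \<times> nat) set \<Rightarrow> nat \<Rightarrow> nat" where
  "row_column n T i = (if i < n then THE j. (i, j) \<in> T else i)"

lemma row_column:
  assumes sub: "T \<subseteq> {0..<n} \<times> {0..<n}" and row: "\<forall>i<n. \<exists>!j. (i, j) \<in> T"
  shows row_column_in: "i < n \<Longrightarrow> (i, row_column n T i) \<in> T"
    and row_column_eq: "(i, j) \<in> T \<Longrightarrow> row_column n T i = j"
proof -
  show "(i, row_column n T i) \<in> T" if "i < n"
    using theI'[OF row[rule_format, OF that]] that by (simp add: row_column_def)
  show "row_column n T i = j" if "(i, j) \<in> T"
  proof -
    have "i < n" using that sub by auto
    thus ?thesis
      using row that by (simp add: row_column_def the1_equality)
  qed
qed

lemma permutation_graph_exists: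
  assumes sub: "T \<subseteq> {0..<n} \<times> {0..<n}"
    and row: "\<forall>i<n. \<exists>!j. (i, j) \<in> T" and col: "\<forall>j<n. \<exists>!i. (i, j) \<in> T"
  shows "\<exists>p. p permutes {0..<n} \<and> T = perm_graph n p"
proof -
  let ?p = "row_column n T"
  note in_T = row_column_in[OF sub row] and unique = row_column_eq[OF sub row]
  have p_lt: "?p i < n" if "i < n" for i
    using subsetD[OF sub in_T[OF that]] by simp
  have inj: "inj_on ?p {0..<n}"
  proof (rule inj_onI)
    fix a b assume a: "a \<in> {0..<n}" and b: "b \<in> {0..<n}" and eq: "?p a = ?p b"
    have "(a, ?p a) \<in> T" "(b, ?p a) \<in> T"
      using in_T[of a] in_T[of b] a b eq by simp_all
    moreover have "\<exists>!i. (i, ?p a) \<in> T"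
      using col p_lt a by simp
    ultimately show "a = b"
      using the1_equality by metis
  qed
  have onto: "?p ` {0..<n} = {0..<n}"
  proof
    show "?p ` {0..<n} \<subseteq> {0..<n}" using p_lt by auto
    show "{0..<n} \<subseteq> ?p ` {0..<n}"
    proof
      fix j assume "j \<in> {0..<n}"
      then obtain i where i: "(i, j) \<in> T" using col by auto
      hence "i < n" using sub by auto
      thus "j \<in> ?p ` {0..<n}" using unique[OF i] by auto
    qed
  qed
  have "bij_betw ?p {0..<n} {0..<n}"
    using inj onto by (simp add: bij_betw_def)
  hence "?p permutes {0..<n}"
    by (rule bij_imp_permutes) (simp add: row_column_def)
  moreover have "T = perm_graph n ?p"
  proof
    show "T \<subseteq> perm_graph n ?p"
    proof
      fix x assume x: "x \<in> T"
      then obtain i j where ij: "x = (i, j)" "i < n" using sub by auto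
      thus "x \<in> perm_graph n ?p" using unique x by (auto simp: perm_graph_def)
    qed
    show "perm_graph n ?p \<subseteq> T" using in_T by (auto simp: perm_graph_def)
  qed
  ultimately show ?thesis by blast
qed

lemma transversals_eq_graphs: "transversals n L = perm_graph n ` transversal_perms n L"
proof
  show "perm_graph n ` transversal_perms n L \<subseteq> transversals n L"
    using transversal_perm_graph by (auto simp: transversals_def)
  show "transversals n L \<subseteq> perm_graph n ` transversal_perms n L"
  proof
    fix T assume "T \<in> transversals n L"
    hence sub: "T \<subseteq> {0..<n} \<times> {0..<n}" and row: "\<forall>i<n. \<exists>!j. (i, j) \<in> T"
      and col: "\<forall>j<n. \<exists>!i. (i, j) \<in> T" and inj_T: "inj_on (\<lambda>(i, j). L i j) T"
      by (simp_all add: transversals_def transversal_def)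
    obtain p where p: "p permutes {0..<n}" and graph: "T = perm_graph n p"
      using permutation_graph_exists[OF sub row col] by blast
    have "inj_on (\<lambda>i. L i (p i)) {0..<n}"
    proof (rule inj_onI)
      fix a b assume a: "a \<in> {0..<n}" and b: "b \<in> {0..<n}" and eq: "L a (p a) = L b (p b)"
      have "(a, p a) \<in> T" "(b, p b) \<in> T"
        using graph a b by (auto simp: perm_graph_def)
      hence "(a, p a) = (b, p b)"
        using inj_onD[OF inj_T, of "(a, p a)" "(b, p b)"] eq by simp
      thus "a = b" by simp
    qed
    thus "T \<in> perm_graph n ` transversal_perms n L"
      using p graph by (simp add: transversal_perms_def)
  qed
qed

lemma card_transversals: "card (transversals n L) = card (transversal_perms n L)"
proof -
  have "inj_on (perm_graph n) (transversal_perms n L)"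
    using perm_graph_inj by (rule inj_on_subset) (auto simp: transversal_perms_def)
  thus ?thesis
    unfolding transversals_eq_graphs by (rule card_image)
qed

theorem theorem1p3:
  fixes n :: nat and S :: "'a set" and L :: "nat \<Rightarrow> nat \<Rightarrow> 'a"
  assumes "latin_square n S L" and "even n" and "n > 0"
  shows "even (card (transversals n L))"
proof -
  interpret row_latin n S L
    using assms(1) by (rule latin_square_row_latin)
  have "S \<noteq> {}"
    using card_symbols assms(3) by auto
  then obtain s0 where "s0 \<in> S" by blast
  have "(of_nat (card (transversal_perms n L)) :: bit) = (\<Sum>A\<in>Pow S. det (symbol_mat n L A))"
    by (rule card_transversal_perms_bit)
  also have "\<dots> = 0"
    using finite_symbols \<open>s0 \<in> S\<close> det_symbol_mat_complement[OF assms(2,3)]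
    by (rule sum_Pow_complement_invariant)
  finally show ?thesis
    by (simp add: card_transversals of_nat_bit)
qed

end
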